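(* In the standing setting below, let $X_i=(x_i,u_i)\in\mathbb{X}\times\mathbb{R}$ for $i=0,1$, and suppose $F_{X_0X_1}(x_i)=u_i$ for $i=0,1$. Then there exist $y\in\mathbb{Y}$ and $h\in\mathbb{R}$ such that $-c(x_i,y)+h=u_i$ for $i=0,1$.
   Context: Standing setting: $\mathbb{X},\mathbb{Y}\subset\mathbb{R}^n$ are compact with non-empty interior; $c:\mathbb{X}\times\mathbb{Y}\to\mathbb{R}$ has continuous $D_xc$, $D_yc$, and continuous mixed second derivatives with $D^2_{xy}c=(D^2_{yx}c)^T$; for each $x$ the map $y\mapsto -D_xc(x,y)$ is injective on $\mathbb{Y}$ and for each $y$ the map $x\mapsto -D_yc(x,y)$ is injective on $\mathbb{X}$; $D^2_{xy}c(x,y)$ is invertible everywhere; for every $y$ the set $\{-D_yc(x,y):x\in\mathbb{X}\}$ is convex and for every $x$ the set $\{-D_xc(x,y):y\in\mathbb{Y}\}$ is convex. $c$-chord: for $X_i=(x_i,u_i)\in\mathbb{X}\times\mathbb{R}$, $F_{X_0X_1}(x)=\sup\{-c(x,y)+h: y\in\mathbb{Y},h\in\mathbb{R},-c(x_i,y)+h\le u_i, i=0,1\}$. *)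

theory Defs
  imports "HOL-Analysis.Analysis"
begin

text \<open>The cost is a curried function
  \<open>c x y\<close>. \<open>Dxc x y\<close> and \<open>Dyc x y\<close> are the gradients of c in x and y;
  \<open>Dxyc x y\<close> is the matrix D^2_{xy}c with entries d^2 c/(dx_i dy_j), i.e. the
  derivative of \<open>y \<mapsto> Dxc x y\<close>; \<open>Dyxc x y\<close> is the derivative of \<open>x \<mapsto> Dyc x y\<close>.\<close>

definition standing_setting ::
  "(real^'n) set \<Rightarrow> (real^'n) set \<Rightarrow> (real^'n \<Rightarrow> real^'n \<Rightarrow> real)
   \<Rightarrow> (real^'n \<Rightarrow> real^'n \<Rightarrow> real^'n) \<Rightarrow> (real^'n \<Rightarrow> real^'n \<Rightarrow> real^'n)
   \<Rightarrow> (real^'n \<Rightarrow> real^'n \<Rightarrow> real^'n^'n) \<Rightarrow> (real^'n \<Rightarrow> real^'n \<Rightarrow> real^'n^'n) \<Rightarrow> bool"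
where
  "standing_setting X Y c Dxc Dyc Dxyc Dyxc \<longleftrightarrow>
     compact X \<and> compact Y \<and> interior X \<noteq> {} \<and> interior Y \<noteq> {}
   \<and> (\<forall>x\<in>X. \<forall>y\<in>Y. ((\<lambda>x'. c x' y) has_derivative (\<lambda>v. Dxc x y \<bullet> v)) (at x within X))
   \<and> (\<forall>x\<in>X. \<forall>y\<in>Y. ((\<lambda>y'. c x y') has_derivative (\<lambda>v. Dyc x y \<bullet> v)) (at y within Y))
   \<and> continuous_on (X \<times> Y) (\<lambda>(x,y). Dxc x y)
   \<and> continuous_on (X \<times> Y) (\<lambda>(x,y). Dyc x y)
   \<and> (\<forall>x\<in>X. \<forall>y\<in>Y. ((\<lambda>y'. Dxc x y') has_derivative (\<lambda>v. Dxyc x y *v v)) (at y within Y))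
   \<and> (\<forall>x\<in>X. \<forall>y\<in>Y. ((\<lambda>x'. Dyc x' y) has_derivative (\<lambda>v. Dyxc x y *v v)) (at x within X))
   \<and> continuous_on (X \<times> Y) (\<lambda>(x,y). Dxyc x y)
   \<and> continuous_on (X \<times> Y) (\<lambda>(x,y). Dyxc x y)
   \<and> (\<forall>x\<in>X. \<forall>y\<in>Y. Dxyc x y = transpose (Dyxc x y))
   \<and> (\<forall>x\<in>X. inj_on (\<lambda>y. - Dxc x y) Y)
   \<and> (\<forall>y\<in>Y. inj_on (\<lambda>x. - Dyc x y) X)
   \<and> (\<forall>x\<in>X. \<forall>y\<in>Y. invertible (Dxyc x y))
   \<and> (\<forall>y\<in>Y. convex ((\<lambda>x. - Dyc x y) ` X))
   \<and> (\<forall>x\<in>X. convex ((\<lambda>y. - Dxc x y) ` Y))"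

definition c_chord ::
  "('a \<Rightarrow> 'b \<Rightarrow> real) \<Rightarrow> 'b set \<Rightarrow> 'a \<Rightarrow> real \<Rightarrow> 'a \<Rightarrow> real \<Rightarrow> 'a \<Rightarrow> real"
where
  "c_chord c Y x0 u0 x1 u1 x =
     Sup {- c x y + h | y h. y \<in> Y \<and> - c x0 y + h \<le> u0 \<and> - c x1 y + h \<le> u1}"

end

theory Submission
  imports Defs
begin

(* Put h_i(y) = u_i + c(x_i,y), the largest h allowed by the i-th constraint for a given y.
   Then F(x_0) = sup_y (-c(x_0,y) + min(h_0(y), h_1(y))), so F(x_0) = u_0 forces h_0 <= h_1
   somewhere on the compact set Y, and symmetrically F(x_1) = u_1 forces h_1 <= h_0 somewhere.
   By the twist condition, y |-> -D_x c(x_0,y) is a continuous injection of Y onto a convex set, so Y is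
   connected and h_1 - h_0 vanishes at some y by the intermediate value theorem. *)

lemma connected_if_inj_convex_image:
  fixes f :: "'a::topological_space \<Rightarrow> 'b::real_normed_vector"
  assumes "compact S" "continuous_on S f" "inj_on f S" "convex (f ` S)"
  shows "connected S"
  using homeomorphic_connectedness[OF homeomorphic_compact[OF assms(1,2) refl assms(3)]]
    convex_connected[OF assms(4)] by blast

lemma connected_ivt:
  fixes f :: "'a::topological_space \<Rightarrow> 'b::linorder_topology"
  assumes "connected S" "continuous_on S f" "a \<in> S" "b \<in> S" "f a \<le> z" "z \<le> f b"
  shows "\<exists>x\<in>S. f x = z"
  using connectedD_interval[OF connected_continuous_image[OF assms(2,1)], of "f a" "f b" z] assms
  by auto

lemma c_chord_swap: "c_chord c Y x1 u1 x0 u0 = c_chord c Y x0 u0 x1 u1"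
  unfolding c_chord_def by (intro ext arg_cong[where f = Sup]) blast

lemma c_chord_le:
  assumes "Y \<noteq> {}"
    and "\<And>y. y \<in> Y \<Longrightarrow> - c x y + min (u0 + c x0 y) (u1 + c x1 y) \<le> b"
  shows "c_chord c Y x0 u0 x1 u1 x \<le> b"
  unfolding c_chord_def
proof (rule cSup_least)
  obtain y where "y \<in> Y" using assms(1) by blast
  then show "{- c x y + h | y h. y \<in> Y \<and> - c x0 y + h \<le> u0 \<and> - c x1 y + h \<le> u1} \<noteq> {}"
    by (intro ex_in_conv[THEN iffD1] exI[of _ "- c x y + min (u0 + c x0 y) (u1 + c x1 y)"]
        CollectI exI[of _ y] exI[of _ "min (u0 + c x0 y) (u1 + c x1 y)"]) auto
next
  fix t assume "t \<in> {- c x y + h | y h. y \<in> Y \<and> - c x0 y + h \<le> u0 \<and> - c x1 y + h \<le> u1}"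
  then obtain y h where "t = - c x y + h" "y \<in> Y" "h \<le> min (u0 + c x0 y) (u1 + c x1 y)"
    by auto
  then show "t \<le> b" using assms(2)[of y] by linarith
qed

lemma c_chord_eq_left_imp_le:
  fixes c :: "'a \<Rightarrow> 'b::topological_space \<Rightarrow> real"
  assumes "compact Y" "Y \<noteq> {}" "continuous_on Y (c x0)" "continuous_on Y (c x1)"
    and "c_chord c Y x0 u0 x1 u1 x0 = u0"
  shows "\<exists>y\<in>Y. u0 + c x0 y \<le> u1 + c x1 y"
proof (rule ccontr)
  assume no_le: "\<not> (\<exists>y\<in>Y. u0 + c x0 y \<le> u1 + c x1 y)"
  define g where "g y = (u1 + c x1 y) - (u0 + c x0 y)" for y
  have "continuous_on Y g" unfolding g_def by (intro continuous_intros assms(3,4))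
  then obtain ym where ym: "ym \<in> Y" "\<And>y. y \<in> Y \<Longrightarrow> g y \<le> g ym"
    using continuous_attains_sup[OF assms(1,2)] by blast
  have "g ym < 0" using no_le ym(1) unfolding g_def by force
  have "c_chord c Y x0 u0 x1 u1 x0 \<le> u0 + g ym"
  proof (rule c_chord_le[OF assms(2)])
    fix y assume "y \<in> Y"
    then show "- c x0 y + min (u0 + c x0 y) (u1 + c x1 y) \<le> u0 + g ym"
      using ym(2)[of y] unfolding g_def by linarith
  qed
  then show False using assms(5) \<open>g ym < 0\<close> by linarith
qed

theorem lemma3p6:
  fixes X Y :: "(real^'n) set" and c :: "real^'n \<Rightarrow> real^'n \<Rightarrow> real"
    and Dxc Dyc :: "real^'n \<Rightarrow> real^'n \<Rightarrow> real^'n"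
    and Dxyc Dyxc :: "real^'n \<Rightarrow> real^'n \<Rightarrow> real^'n^'n"
    and x0 x1 :: "real^'n" and u0 u1 :: real
  assumes "standing_setting X Y c Dxc Dyc Dxyc Dyxc"
    and "x0 \<in> X" and "x1 \<in> X"
    and "c_chord c Y x0 u0 x1 u1 x0 = u0"
    and "c_chord c Y x0 u0 x1 u1 x1 = u1"
  shows "\<exists>y\<in>Y. \<exists>h. - c x0 y + h = u0 \<and> - c x1 y + h = u1"
proof -
  note S = assms(1)[unfolded standing_setting_def]
  have Y: "compact Y" "Y \<noteq> {}" using S by auto
  have cont0: "continuous_on Y (c x0)" and cont1: "continuous_on Y (c x1)"
    using S assms(2,3) by (auto intro!: has_derivative_continuous_on)
  have "continuous_on Y (Dxc x0)"
    using continuous_on_o_Pair[of X Y "\<lambda>(x, y). Dxc x y" x0] S assms(2) by (simp add: o_def)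
  then have "connected Y"
    using S assms(2) by (intro connected_if_inj_convex_image[OF Y(1), of "\<lambda>y. - Dxc x0 y"])
      (auto intro: continuous_intros)
  obtain ya where "ya \<in> Y" "u0 + c x0 ya \<le> u1 + c x1 ya"
    using c_chord_eq_left_imp_le[OF Y cont0 cont1 assms(4)] by blast
  moreover obtain yb where "yb \<in> Y" "u1 + c x1 yb \<le> u0 + c x0 yb"
    using c_chord_eq_left_imp_le[OF Y cont1 cont0, of u1 u0] assms(5) c_chord_swap by metis
  moreover have "continuous_on Y (\<lambda>y. u1 + c x1 y - (u0 + c x0 y))"
    by (intro continuous_intros cont0 cont1)
  ultimately have "\<exists>y\<in>Y. u1 + c x1 y - (u0 + c x0 y) = 0"
    by (intro connected_ivt[OF \<open>connected Y\<close>, of _ yb ya]) auto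
  then obtain y where "y \<in> Y" "u1 + c x1 y - (u0 + c x0 y) = 0" by blast
  then show ?thesis by (intro bexI[of _ y] exI[of _ "u0 + c x0 y"]) auto
qed

end
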